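(* Every zero-error randomized streaming algorithm for \textsc{Find-Duplicate} that is $\frac{n}{s}$-concentrated must use $\Omega\left(\frac{s}{\log n}\right)$ space.
   Context: \textsc{Find-Duplicate}: the input is a stream of $3n/2$ integers, each in $\{1,\dots,n\}$; the goal is to output an integer that appears at least twice in the stream. A randomized algorithm is zero-error if with probability one it either outputs a valid output (an integer that indeed appears at least twice) or outputs the failure symbol $\bot$; it never outputs an invalid answer. An algorithm $A$ is $k$-concentrated if for every valid input $x$ there is some output $F(x)$ such that $\Pr_r[A(x,r)=F(x)]\ge \frac1k$, where $r$ is the algorithm's randomness. Space is measured in bits of memory of the one-pass streaming algorithm. *)

theory Defs
  imports "HOL-Probability.Probability" "HOL-Library.Multiset"
begin

text \<open>A deterministic one-pass streaming algorithm: initial state, transition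
  function (state, next stream symbol) to state, and output function on the final
  state (None = failure symbol bottom). States are natural numbers; an algorithm
  uses S bits of memory if all reachable states lie below 2^S.\<close>

type_synonym det_alg = "nat \<times> (nat \<Rightarrow> nat \<Rightarrow> nat) \<times> (nat \<Rightarrow> nat option)"

fun run_alg :: "det_alg \<Rightarrow> nat list \<Rightarrow> nat option" where
  "run_alg (q0, delta, out) xs = out (foldl delta q0 xs)"

fun det_space :: "nat \<Rightarrow> nat \<Rightarrow> det_alg \<Rightarrow> bool" where
  "det_space n S (q0, delta, out) \<longleftrightarrow>
     q0 < 2 ^ S \<and> (\<forall>q < 2 ^ S. \<forall>a \<in> {1..n}. delta q a < 2 ^ S)"

text \<open>A randomized streaming algorithm is a probability distribution over
  deterministic algorithms (the randomness r selects the deterministic algorithm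
  A(., r)).\<close>

definition rand_space :: "nat \<Rightarrow> nat \<Rightarrow> det_alg pmf \<Rightarrow> bool" where
  "rand_space n S A \<longleftrightarrow> (\<forall>D \<in> set_pmf A. det_space n S D)"

definition valid_input :: "nat \<Rightarrow> nat list \<Rightarrow> bool" where
  "valid_input n xs \<longleftrightarrow> length xs = 3 * n div 2 \<and> set xs \<subseteq> {1..n}"

definition is_dup :: "nat list \<Rightarrow> nat \<Rightarrow> bool" where
  "is_dup xs a \<longleftrightarrow> count (mset xs) a \<ge> 2"

definition zero_error :: "nat \<Rightarrow> det_alg pmf \<Rightarrow> bool" where
  "zero_error n A \<longleftrightarrow>
     (\<forall>xs. valid_input n xs \<longrightarrow>
        (AE D in measure_pmf A. (case run_alg D xs of None \<Rightarrow> True | Some a \<Rightarrow> is_dup xs a)))"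

definition concentrated :: "nat \<Rightarrow> real \<Rightarrow> det_alg pmf \<Rightarrow> bool" where
  "concentrated n k A \<longleftrightarrow>
     (\<forall>xs. valid_input n xs \<longrightarrow>
        (\<exists>a. is_dup xs a \<and> measure_pmf.prob A {D. run_alg D xs = Some a} \<ge> 1 / k))"

end

theory Submission
  imports Defs "HOL-Real_Asymp.Real_Asymp"
begin

text \<open>Fix a deterministic algorithm D of the support and stream an L-subset X of
  {1..n} in increasing order, followed by an (n - r)-subset Y, where L + (n - r) = 3n/2.
  The output only depends on the memory state reached after X, so a zero-error D can
  only output elements of the forced set of X: the intersection of all L-sets leading
  to that state. A state class whose forced set has \<tau> elements consists of supersets
  of one \<tau>-set, and there are only 2^S states; averaging over X yields an X whose forced
  set has at least \<tau> elements with probability at most 2^S (L/n)^\<tau>. Otherwise it has fewer than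
  \<tau> elements, so at most r elements are forced with probability above \<tau>/r, and a
  completion Y avoiding them gives every admissible output probability at most
  \<tau>/r + 2^S (L/n)^\<tau>. Concentration makes this at least s/n; taking n = 2m, r = m/2,
  L = 3m/2 and \<tau> = 3(S + log n) yields s = O(S log n).\<close>

fun alg_state :: "det_alg \<Rightarrow> nat list \<Rightarrow> nat" where
  "alg_state (q0, delta, out) xs = foldl delta q0 xs"

lemma run_alg_append_cong:
  assumes "alg_state D xs = alg_state D xs'"
  shows "run_alg D (xs @ ys) = run_alg D (xs' @ ys)"
  using assms by (cases D) simp

lemma alg_state_less:
  assumes "det_space n S D" "set xs \<subseteq> {1..n}"
  shows "alg_state D xs < 2 ^ S"
  using assms(2)
proof (induction xs rule: rev_induct)
  case Nil
  then show ?case using assms(1) by (cases D) simp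
next
  case (snoc x xs)
  then show ?case using assms(1) by (cases D) auto
qed

lemma zero_errorD:
  assumes "zero_error n A" "D \<in> set_pmf A" "valid_input n xs" "run_alg D xs = Some a"
  shows "is_dup xs a"
  using assms unfolding zero_error_def AE_measure_pmf_iff by fastforce

lemma count_sorted_list_of_set:
  "finite X \<Longrightarrow> count (mset (sorted_list_of_set X)) a = (if a \<in> X then 1 else 0)"
  by (metis count_mset_set' distinct_sorted_list_of_set mset_set_set set_sorted_list_of_set)

lemma is_dup_sorted_sets:
  assumes "finite X" "finite Y" "is_dup (sorted_list_of_set X @ sorted_list_of_set Y) a"
  shows "a \<in> X" "a \<in> Y"
  using assms by (auto simp: is_dup_def count_sorted_list_of_set split: if_splits)

lemma valid_input_sorted_sets:
  assumes "X \<subseteq> {1..n}" "Y \<subseteq> {1..n}" "card X + card Y = 3 * n div 2"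
  shows "valid_input n (sorted_list_of_set X @ sorted_list_of_set Y)"
proof -
  have "finite X" "finite Y"
    using assms(1,2) finite_subset by blast+
  then show ?thesis
    using assms by (simp add: valid_input_def)
qed

lemma valid_input_replicate:
  "a \<in> {1..n} \<Longrightarrow> valid_input n (replicate (3 * n div 2) a)"
  by (simp add: valid_input_def)

lemma is_dup_replicate: "is_dup (replicate k a) b \<Longrightarrow> b = a"
  by (simp add: is_dup_def split: if_splits)

lemma concentrated_ge_one:
  assumes "1 \<le> n" "concentrated n K A" "0 < K"
  shows "1 \<le> K"
proof -
  obtain a where "1 / K \<le> measure_pmf.prob A {D. run_alg D (replicate (3 * n div 2) 1) = Some a}"
    using assms(1,2) valid_input_replicate[of 1 n] unfolding concentrated_def by auto
  then have "1 / K \<le> 1"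
    using measure_pmf.prob_le_1 order_trans by blast
  then show ?thesis
    using assms(3) by (simp add: divide_le_eq)
qed

text \<open>With a single memory state the output cannot depend on the input, but the
  constant streams of 1s and of 2s have no duplicate in common.\<close>

lemma zero_space_not_concentrated:
  assumes "2 \<le> n" "zero_error n A" "rand_space n 0 A" "0 < K"
  shows "\<not> concentrated n K A"
proof
  assume conc: "concentrated n K A"
  define ones where "ones = replicate (3 * n div 2) (1::nat)"
  define twos where "twos = replicate (3 * n div 2) (2::nat)"
  have valid: "valid_input n ones" "valid_input n twos"
    using assms(1) valid_input_replicate unfolding ones_def twos_def by auto
  have none: "run_alg D ones = None" if D: "D \<in> set_pmf A" for D
  proof (cases "run_alg D ones")
    case (Some a)
    have "alg_state D ones = alg_state D twos"
      using alg_state_less[of n 0 D] D valid assms(3)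
      by (simp add: rand_space_def valid_input_def)
    then have "run_alg D twos = Some a"
      using run_alg_append_cong[of D ones twos "[]"] Some by simp
    then have "a = 2" "a = 1"
      using zero_errorD[OF assms(2) D] valid Some is_dup_replicate
      unfolding ones_def twos_def by blast+
    then show ?thesis by simp
  qed
  then have "measure_pmf.prob A {D. run_alg D ones = Some a} = 0" for a
    using none by (subst measure_pmf_zero_iff) (auto simp del: run_alg.simps)
  moreover obtain a where "1 / K \<le> measure_pmf.prob A {D. run_alg D ones = Some a}"
    using conc valid unfolding concentrated_def by blast
  ultimately show False
    using assms(4) by simp
qed

definition subsets_of_card :: "nat \<Rightarrow> nat \<Rightarrow> nat set set" where
  "subsets_of_card n L = {X. X \<subseteq> {1..n} \<and> card X = L}"

lemma finite_subsets_of_card: "finite (subsets_of_card n L)"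
  by (rule finite_subset[of _ "Pow {1..n}"]) (auto simp: subsets_of_card_def)

lemma card_subsets_of_card: "card (subsets_of_card n L) = n choose L"
  using n_subsets[of "{1..n}" L] by (simp add: subsets_of_card_def)

lemma finite_mem_subsets_of_card: "X \<in> subsets_of_card n L \<Longrightarrow> finite X"
  unfolding subsets_of_card_def using finite_subset by blast

lemma card_supersets_le:
  assumes "finite N" "U \<subseteq> N"
  shows "card {X. X \<subseteq> N \<and> card X = L \<and> U \<subseteq> X} \<le> (card N - card U) choose (L - card U)"
proof -
  have "finite U"
    using assms finite_subset by blast
  have "card {X. X \<subseteq> N \<and> card X = L \<and> U \<subseteq> X}
        \<le> card {Z. Z \<subseteq> N - U \<and> card Z = L - card U}"
  proof (rule card_inj_on_le[where f = "\<lambda>X. X - U"])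
    show "inj_on (\<lambda>X. X - U) {X. X \<subseteq> N \<and> card X = L \<and> U \<subseteq> X}"
      by (rule inj_onI) blast
    show "(\<lambda>X. X - U) ` {X. X \<subseteq> N \<and> card X = L \<and> U \<subseteq> X}
          \<subseteq> {Z. Z \<subseteq> N - U \<and> card Z = L - card U}"
      using \<open>finite U\<close> by (auto simp: card_Diff_subset)
    show "finite {Z. Z \<subseteq> N - U \<and> card Z = L - card U}"
      using assms(1) by (auto intro: finite_subset[of _ "Pow (N - U)"])
  qed
  also have "\<dots> = card (N - U) choose (L - card U)"
    using assms(1) by (intro n_subsets) simp
  finally show ?thesis
    using assms \<open>finite U\<close> by (simp add: card_Diff_subset)
qed

lemma binomial_diff_le_ratio_power:
  assumes "t \<le> L" "L \<le> n"
  shows "real ((n - t) choose (L - t)) \<le> real (n choose L) * (real L / real n) ^ t"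
  using assms
proof (induction t arbitrary: n L)
  case 0
  then show ?case by simp
next
  case (Suc t)
  have "real ((n - Suc t) choose (L - Suc t)) = real ((n - 1 - t) choose (L - 1 - t))"
    by simp
  also have "\<dots> \<le> real ((n - 1) choose (L - 1)) * (real (L - 1) / real (n - 1)) ^ t"
    using Suc.prems by (intro Suc.IH) auto
  also have "\<dots> \<le> real ((n - 1) choose (L - 1)) * (real L / real n) ^ t"
  proof -
    have "real (L - 1) * real n \<le> real L * real (n - 1)"
      using Suc.prems by (simp add: algebra_simps)
    then have "real (L - 1) / real (n - 1) \<le> real L / real n"
      using Suc.prems by (cases "n = 1") (simp_all add: divide_simps)
    then show ?thesis
      by (intro mult_left_mono power_mono) auto
  qed
  also have "real ((n - 1) choose (L - 1)) = real (n choose L) * (real L / real n)"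
  proof -
    have "real L * real (n choose L) = real n * real ((n - 1) choose (L - 1))"
      using binomial_absorption[of "L - 1" n] Suc.prems
      by (metis Suc_pred' less_le_trans of_nat_mult zero_less_Suc)
    then show ?thesis
      using Suc.prems by (simp add: field_simps)
  qed
  finally show ?case
    by (simp add: mult.assoc)
qed

lemma sum_prob_le_card_bound:
  fixes A :: "'a pmf" and c :: real
  assumes "finite I" "\<And>D. D \<in> set_pmf A \<Longrightarrow> card {i\<in>I. P i D} \<le> c"
  shows "(\<Sum>i\<in>I. measure_pmf.prob A {D. P i D}) \<le> c"
proof -
  have "(\<Sum>i\<in>I. measure_pmf.prob A {D. P i D})
        = measure_pmf.expectation A (\<lambda>D. \<Sum>i\<in>I. indicator {D. P i D} D)"
    by (subst Bochner_Integration.integral_sum)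
       (auto intro!: measure_pmf.integrable_const_bound[where B = 1])
  also have "\<dots> = measure_pmf.expectation A (\<lambda>D. card {i\<in>I. P i D})"
    using assms(1) by (simp add: indicator_def of_bool_def sum.If_cases Collect_conj_eq Int_commute)
  also have "\<dots> \<le> c"
    using assms
    by (intro measure_pmf.integral_le_const)
       (auto intro!: measure_pmf.integrable_const_bound[where B = "card I"] card_mono
             simp: AE_measure_pmf_iff)
  finally show ?thesis .
qed

lemma exists_le_average:
  fixes f :: "'a \<Rightarrow> real" and d :: real
  assumes "finite I" "I \<noteq> {}" "(\<Sum>i\<in>I. f i) \<le> card I * d"
  shows "\<exists>i\<in>I. f i \<le> d"
proof (rule ccontr)
  assume "\<not> (\<exists>i\<in>I. f i \<le> d)"
  then have "(\<Sum>i\<in>I. d) < (\<Sum>i\<in>I. f i)"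
    using assms(1,2) by (intro sum_strict_mono) auto
  then show False
    using assms(3) by simp
qed

lemma card_above_threshold_le:
  fixes g :: "'a \<Rightarrow> real"
  assumes "finite N" "\<And>a. a \<in> N \<Longrightarrow> 0 \<le> g a" "(\<Sum>a\<in>N. g a) \<le> c" "0 < c" "0 < r"
  shows "card {a\<in>N. c / r < g a} \<le> r"
proof -
  have "card {a\<in>N. c / r < g a} * (c / r) \<le> (\<Sum>a\<in>{a\<in>N. c / r < g a}. g a)"
    by (rule sum_bounded_below) simp
  also have "\<dots> \<le> (\<Sum>a\<in>N. g a)"
    using assms(1,2) by (intro sum_mono2) auto
  finally have "card {a\<in>N. c / r < g a} * (c / r) \<le> c"
    using assms(3) by linarith
  then show ?thesis
    using assms(4,5) by (simp add: field_simps)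
qed

definition forced :: "det_alg \<Rightarrow> nat \<Rightarrow> nat \<Rightarrow> nat set \<Rightarrow> nat set" where
  "forced D n L X = \<Inter>{X' \<in> subsets_of_card n L.
     alg_state D (sorted_list_of_set X') = alg_state D (sorted_list_of_set X)}"

lemma forced_subset: "X \<in> subsets_of_card n L \<Longrightarrow> forced D n L X \<subseteq> X"
  unfolding forced_def by (rule Inter_lower) simp

lemma forced_cong:
  "alg_state D (sorted_list_of_set X) = alg_state D (sorted_list_of_set X')
   \<Longrightarrow> forced D n L X = forced D n L X'"
  by (simp add: forced_def)

lemma output_mem_forced:
  assumes "zero_error n A" "D \<in> set_pmf A" "X \<in> subsets_of_card n L"
    "Y \<subseteq> {1..n}" "L + card Y = 3 * n div 2"
    "run_alg D (sorted_list_of_set X @ sorted_list_of_set Y) = Some a"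
  shows "a \<in> forced D n L X"
  unfolding forced_def
proof (rule InterI)
  fix X' assume "X' \<in> {X' \<in> subsets_of_card n L.
    alg_state D (sorted_list_of_set X') = alg_state D (sorted_list_of_set X)}"
  then have X': "X' \<in> subsets_of_card n L"
    and same: "alg_state D (sorted_list_of_set X') = alg_state D (sorted_list_of_set X)"
    by auto
  have "valid_input n (sorted_list_of_set X' @ sorted_list_of_set Y)"
    using X' assms(4,5) by (intro valid_input_sorted_sets) (auto simp: subsets_of_card_def)
  moreover have "run_alg D (sorted_list_of_set X' @ sorted_list_of_set Y) = Some a"
    using run_alg_append_cong[OF same] assms(6) by simp
  ultimately have "is_dup (sorted_list_of_set X' @ sorted_list_of_set Y) a"
    by (rule zero_errorD[OF assms(1,2)])
  then show "a \<in> X'"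
    using is_dup_sorted_sets(1) finite_mem_subsets_of_card[OF X'] finite_subset[OF assms(4)]
    by blast
qed

lemma card_large_forced_le:
  assumes "det_space n S D"
  shows "card {X \<in> subsets_of_card n L. \<tau> \<le> card (forced D n L X)}
         \<le> 2 ^ S * ((n - \<tau>) choose (L - \<tau>))"
proof -
  define Bad where "Bad = {X \<in> subsets_of_card n L. \<tau> \<le> card (forced D n L X)}"
  define state_class where "state_class q = {X \<in> Bad. alg_state D (sorted_list_of_set X) = q}" for q
  have "alg_state D (sorted_list_of_set X) < 2 ^ S" if "X \<in> subsets_of_card n L" for X
    using alg_state_less[OF assms, of "sorted_list_of_set X"] finite_mem_subsets_of_card[OF that] that
    by (simp add: subsets_of_card_def)
  then have Bad_eq: "Bad = (\<Union>q<2 ^ S. state_class q)"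
    by (auto simp: Bad_def state_class_def)
  have class_card: "card (state_class q) \<le> (n - \<tau>) choose (L - \<tau>)" for q
  proof (cases "state_class q = {}")
    case False
    then obtain X0 where X0: "X0 \<in> state_class q" by blast
    then have X0_mem: "X0 \<in> subsets_of_card n L" and X0_big: "\<tau> \<le> card (forced D n L X0)"
      by (auto simp: state_class_def Bad_def)
    obtain U where U: "U \<subseteq> forced D n L X0" "card U = \<tau>"
      using ex_card[OF X0_big] by blast
    have U_sub: "U \<subseteq> {1..n}"
      using U(1) forced_subset[OF X0_mem, of D] X0_mem by (auto simp: subsets_of_card_def)
    have "state_class q \<subseteq> {X. X \<subseteq> {1..n} \<and> card X = L \<and> U \<subseteq> X}"
    proof
      fix X assume X: "X \<in> state_class q"
      then have X_mem: "X \<in> subsets_of_card n L"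
        by (simp add: state_class_def Bad_def)
      have "forced D n L X = forced D n L X0"
        using X X0 by (intro forced_cong) (simp add: state_class_def)
      then have "U \<subseteq> X"
        using U(1) forced_subset[OF X_mem] by blast
      then show "X \<in> {X. X \<subseteq> {1..n} \<and> card X = L \<and> U \<subseteq> X}"
        using X_mem by (simp add: subsets_of_card_def)
    qed
    then have "card (state_class q) \<le> card {X. X \<subseteq> {1..n} \<and> card X = L \<and> U \<subseteq> X}"
      by (rule card_mono[rotated]) (auto intro: finite_subset[of _ "Pow {1..n}"])
    also have "\<dots> \<le> (n - \<tau>) choose (L - \<tau>)"
      using card_supersets_le[of "{1..n}" U L] U U_sub by simp
    finally show ?thesis .
  qed simp
  have "card Bad \<le> (\<Sum>q<2 ^ S. card (state_class q))"
    unfolding Bad_eq by (rule card_UN_le) simp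
  also have "\<dots> \<le> (\<Sum>q<(2::nat) ^ S. (n - \<tau>) choose (L - \<tau>))"
    by (rule sum_mono) (rule class_card)
  finally show ?thesis
    by (simp add: Bad_def)
qed

lemma exists_set_rarely_forcing_many:
  assumes "rand_space n S A" "\<tau> \<le> L" "L \<le> n"
  shows "\<exists>X \<in> subsets_of_card n L.
           measure_pmf.prob A {D. \<tau> \<le> card (forced D n L X)} \<le> 2 ^ S * (real L / real n) ^ \<tau>"
proof (rule exists_le_average)
  show "finite (subsets_of_card n L)"
    by (rule finite_subsets_of_card)
  show "subsets_of_card n L \<noteq> {}"
    using assms(3) by (auto simp: subsets_of_card_def intro!: exI[of _ "{1..L}"])
  have "(\<Sum>X\<in>subsets_of_card n L. measure_pmf.prob A {D. \<tau> \<le> card (forced D n L X)})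
        \<le> 2 ^ S * real ((n - \<tau>) choose (L - \<tau>))"
  proof (rule sum_prob_le_card_bound[OF finite_subsets_of_card])
    fix D assume "D \<in> set_pmf A"
    then have "card {X \<in> subsets_of_card n L. \<tau> \<le> card (forced D n L X)}
               \<le> 2 ^ S * ((n - \<tau>) choose (L - \<tau>))"
      using assms(1) card_large_forced_le unfolding rand_space_def by blast
    then show "card {X \<in> subsets_of_card n L. \<tau> \<le> card (forced D n L X)}
               \<le> 2 ^ S * real ((n - \<tau>) choose (L - \<tau>))"
      using of_nat_mono[where 'a = real] by fastforce
  qed
  also have "\<dots> \<le> 2 ^ S * (real (n choose L) * (real L / real n) ^ \<tau>)"
    using assms(2,3) by (intro mult_left_mono binomial_diff_le_ratio_power) auto
  finally show "(\<Sum>X\<in>subsets_of_card n L. measure_pmf.prob A {D. \<tau> \<le> card (forced D n L X)})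
        \<le> card (subsets_of_card n L) * (2 ^ S * (real L / real n) ^ \<tau>)"
    by (simp add: card_subsets_of_card mult_ac)
qed

lemma exists_completion_rarely_forced:
  assumes "X \<in> subsets_of_card n L" "0 < \<tau>" "0 < r"
  shows "\<exists>Y \<subseteq> {1..n}. card Y = n - r \<and>
           (\<forall>a \<in> Y. measure_pmf.prob A {D. a \<in> forced D n L X \<and> card (forced D n L X) < \<tau>}
                       \<le> real \<tau> / real r)"
proof -
  define g where "g a = measure_pmf.prob A {D. a \<in> forced D n L X \<and> card (forced D n L X) < \<tau>}"
    for a
  have "(\<Sum>a\<in>{1..n}. g a) \<le> \<tau>"
    unfolding g_def
  proof (rule sum_prob_le_card_bound)
    fix D
    define F where "F = forced D n L X"
    have "finite F"
      unfolding F_def using forced_subset[OF assms(1)] finite_mem_subsets_of_card[OF assms(1)]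
      by (rule finite_subset)
    moreover have "{a\<in>{1..n}. a \<in> F \<and> card F < \<tau>} \<subseteq> (if card F < \<tau> then F else {})"
      by auto
    ultimately have "card {a\<in>{1..n}. a \<in> F \<and> card F < \<tau>} \<le> card (if card F < \<tau> then F else {})"
      by (intro card_mono) simp_all
    then show "card {a\<in>{1..n}. a \<in> forced D n L X \<and> card (forced D n L X) < \<tau>} \<le> real \<tau>"
      unfolding F_def by (simp split: if_splits)
  qed simp
  then have "card {a\<in>{1..n}. \<tau> / r < g a} \<le> r"
    using assms(2,3) by (intro card_above_threshold_le) (auto simp: g_def)
  then have "n - r \<le> card ({1..n} - {a\<in>{1..n}. \<tau> / r < g a})"
    by (subst card_Diff_subset) auto
  then obtain Y where Y: "Y \<subseteq> {1..n} - {a\<in>{1..n}. \<tau> / r < g a}" "card Y = n - r"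
    using ex_card by blast
  then have "Y \<subseteq> {1..n}" "\<forall>a \<in> Y. g a \<le> \<tau> / r"
    by auto
  then show ?thesis
    using Y(2) unfolding g_def by blast
qed

lemma inverse_concentration_le:
  assumes "zero_error n A" "concentrated n K A" "rand_space n S A"
    "0 < \<tau>" "\<tau> \<le> L" "L \<le> n" "0 < r" "L + (n - r) = 3 * n div 2"
  shows "1 / K \<le> real \<tau> / real r + 2 ^ S * (real L / real n) ^ \<tau>"
proof -
  obtain X where X: "X \<in> subsets_of_card n L"
    and rarely_many: "measure_pmf.prob A {D. \<tau> \<le> card (forced D n L X)}
                        \<le> 2 ^ S * (real L / real n) ^ \<tau>"
    using exists_set_rarely_forcing_many[OF assms(3,5,6)] by blast
  obtain Y where Y: "Y \<subseteq> {1..n}" "card Y = n - r"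
    and rarely_elem: "\<forall>a \<in> Y. measure_pmf.prob A
                        {D. a \<in> forced D n L X \<and> card (forced D n L X) < \<tau>} \<le> real \<tau> / real r"
    using exists_completion_rarely_forced[OF X assms(4,7)] by blast
  define xs where "xs = sorted_list_of_set X @ sorted_list_of_set Y"
  have "valid_input n xs"
    unfolding xs_def using X Y assms(8)
    by (intro valid_input_sorted_sets) (auto simp: subsets_of_card_def)
  then obtain a where "is_dup xs a"
    and concentrated: "1 / K \<le> measure_pmf.prob A {D. run_alg D xs = Some a}"
    using assms(2) unfolding concentrated_def by blast
  then have "a \<in> Y"
    using is_dup_sorted_sets(2) finite_mem_subsets_of_card[OF X] finite_subset[OF Y(1)]
    unfolding xs_def by blast
  have "measure_pmf.prob A {D. run_alg D xs = Some a}
        \<le> measure_pmf.prob A ({D. a \<in> forced D n L X \<and> card (forced D n L X) < \<tau>}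
                              \<union> {D. \<tau> \<le> card (forced D n L X)})"
    using output_mem_forced[OF assms(1) _ X Y(1)] Y(2) assms(8)
    by (intro measure_pmf.finite_measure_mono_AE)
       (auto simp: AE_measure_pmf_iff xs_def not_le simp del: run_alg.simps)
  also have "\<dots> \<le> measure_pmf.prob A {D. a \<in> forced D n L X \<and> card (forced D n L X) < \<tau>}
                  + measure_pmf.prob A {D. \<tau> \<le> card (forced D n L X)}"
    by (rule measure_Un_le) simp_all
  also have "\<dots> \<le> real \<tau> / real r + 2 ^ S * (real L / real n) ^ \<tau>"
    using rarely_elem \<open>a \<in> Y\<close> rarely_many by (intro add_mono) auto
  finally show ?thesis
    using concentrated by linarith
qed

lemma two_power_mult_power_le:
  fixes x :: real
  assumes "0 \<le> x" "x \<le> 3 / 4"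
  shows "2 ^ S * x ^ (3 * (S + k)) \<le> 1 / 2 ^ k"
proof -
  have "x ^ 3 \<le> (3 / 4) ^ 3"
    using assms by (rule power_mono[rotated])
  also have "\<dots> \<le> 1 / 2"
    by (simp add: power3_eq_cube)
  finally have "x ^ (3 * (S + k)) \<le> (1 / 2) ^ (S + k)"
    unfolding power_mult using assms(1) by (intro power_mono) simp_all
  then have "2 ^ S * x ^ (3 * (S + k)) \<le> 2 ^ S * (1 / 2) ^ (S + k)"
    by (intro mult_left_mono) simp_all
  also have "\<dots> = 1 / 2 ^ k"
    by (simp add: power_add power_one_over)
  finally show ?thesis .
qed

lemma exists_power_of_two_ge:
  assumes "1 \<le> x"
  shows "\<exists>k. x \<le> 2 ^ k \<and> real k \<le> log 2 x + 1"
proof (intro exI conjI)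
  have "0 \<le> log 2 x"
    using assms by simp
  have "x = 2 powr log 2 x"
    using assms by simp
  also have "\<dots> \<le> 2 powr real (nat \<lceil>log 2 x\<rceil>)"
    using \<open>0 \<le> log 2 x\<close> by (intro powr_mono) linarith+
  finally show "x \<le> 2 ^ nat \<lceil>log 2 x\<rceil>"
    by (simp add: powr_realpow)
  show "real (nat \<lceil>log 2 x\<rceil>) \<le> log 2 x + 1"
    using \<open>0 \<le> log 2 x\<close> by linarith
qed

lemma concentration_le_space_plus_log:
  assumes "n = 2 * m" "4 \<le> n" "zero_error n A" "concentrated n K A" "rand_space n S A"
    "real n \<le> 2 ^ k" "0 < S" "3 * (S + k) \<le> m + m div 2"
  shows "real n / K \<le> 24 * real S + 24 * real k + 1"
proof -
  define r where "r = m div 2"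
  define \<tau> where "\<tau> = 3 * (S + k)"
  have "1 / K \<le> real \<tau> / real r + 2 ^ S * (real (m + r) / real n) ^ \<tau>"
    using assms(2-5,7,8)
    by (intro inverse_concentration_le) (auto simp: \<tau>_def r_def assms(1))
  also have "real \<tau> / real r \<le> 8 * real \<tau> / real n"
  proof -
    have "n \<le> 8 * r"
      using assms(1,2) unfolding r_def by linarith
    then have "real \<tau> * real n \<le> real \<tau> * (8 * real r)"
      by (intro mult_left_mono) simp_all
    then show ?thesis
      using assms(2) by (simp add: divide_simps mult.left_commute)
  qed
  also have "2 ^ S * (real (m + r) / real n) ^ \<tau> \<le> 1 / 2 ^ k"
  proof -
    have "real (4 * (m + r)) \<le> real (3 * n)"
      unfolding assms(1) r_def by (intro of_nat_mono) presburger
    then have "real (m + r) / real n \<le> 3 / 4"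
      using assms(2) by (simp add: divide_simps)
    then show ?thesis
      unfolding \<tau>_def by (intro two_power_mult_power_le) simp_all
  qed
  also have "1 / 2 ^ k \<le> 1 / real n"
    using assms(2,6) by (simp add: frac_le)
  finally show ?thesis
    using assms(2) by (simp add: \<tau>_def field_simps)
qed

lemma concentrated_space_bound:
  assumes "even n" "4 \<le> n" "log 2 n \<le> n / 8 - 2"
    "zero_error n A" "concentrated n K A" "rand_space n S A" "0 < K"
  shows "real n / K \<le> 73 * real S * log 2 n"
proof -
  define l where "l = log 2 (real n)"
  have "1 \<le> l"
    using assms(2) by (simp add: l_def le_log_iff)
  have "1 \<le> S"
    using zero_space_not_concentrated[of n A K] assms(2,4-7) by (cases S) auto
  then have S_l: "real S \<le> real S * l" "l \<le> real S * l"
    using \<open>1 \<le> l\<close> by (simp_all add: mult_le_cancel_left1 mult_le_cancel_right1)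
  have "1 \<le> K"
    using concentrated_ge_one[OF _ assms(5,7)] assms(2) by simp
  then have n_div_K: "real n / K \<le> real n"
    using divide_left_mono[OF \<open>1 \<le> K\<close>, of "real n"] by simp
  obtain k where k: "real n \<le> 2 ^ k" "real k \<le> l + 1"
    using exists_power_of_two_ge[of "real n"] assms(2) by (auto simp: l_def)
  obtain m where n: "n = 2 * m"
    using assms(1) by blast
  have "real n / K \<le> 73 * (real S * l)"
  proof (cases "3 * (S + k) \<le> m + m div 2")
    case True
    then have "real n / K \<le> 24 * real S + 24 * real k + 1"
      using assms(2,4-6) k(1) \<open>1 \<le> S\<close> by (intro concentration_le_space_plus_log[OF n]) auto
    then show ?thesis
      using k(2) S_l \<open>1 \<le> l\<close> by linarith
  next
    case False
    then have "real (3 * m) \<le> real (6 * (S + k))"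
      by (intro of_nat_mono) presburger
    then have "real n \<le> 8 * real S"
      using assms(3) k(2) by (simp add: n l_def)
    then show ?thesis
      using n_div_K S_l by linarith
  qed
  then show ?thesis
    by (simp add: l_def mult.assoc)
qed

theorem mainTheorem3:
  shows "\<exists>c > 0. \<exists>N. \<forall>n \<ge> N. \<forall>(s::real) > 0. \<forall>A S.
           even n \<and> zero_error n A \<and> concentrated n (real n / s) A \<and> rand_space n S A
           \<longrightarrow> real S \<ge> c * s / log 2 (real n)"
proof -
  have "\<forall>\<^sub>F x in at_top. log 2 x \<le> x / 8 - (2::real)"
    by real_asymp
  then obtain N where N: "\<And>x. N \<le> x \<Longrightarrow> log 2 x \<le> x / 8 - 2"
    by (auto simp: eventually_at_top_linorder)
  show ?thesis
  proof (intro exI[of _ "1 / 73"] conjI exI[of _ "max 4 (nat \<lceil>N\<rceil>)"] allI impI)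
    fix n s A S
    assume n: "max 4 (nat \<lceil>N\<rceil>) \<le> n" and "0 < s"
      and H: "even n \<and> zero_error n A \<and> concentrated n (real n / s) A \<and> rand_space n S A"
    then have "real n / (real n / s) \<le> 73 * real S * log 2 n"
      using N[of "real n"] by (intro concentrated_space_bound) auto
    moreover have "0 < log 2 (real n)"
      using n by simp
    ultimately show "1 / 73 * s / log 2 (real n) \<le> real S"
      using n by (simp add: field_simps)
  qed simp
qed

end
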